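(* Let $X$ be a Banach space and let $\Pi(X)=\{(x,x^* )\in S_X\times S_{X^*}\colon x^*(x)=1\}$. The following are equivalent: (i) $X$ has property [P]; (ii) the set $\{(x,x^* )\in\operatorname{str\text{-}exp}(B_X)\times\operatorname{SE}(X)\colon \|x^*\|=x^*(x)=1\}$ is dense in $\Pi(X)$; (iii) $X$ has property [P] witnessed by the function $\varepsilon\mapsto\varepsilon^2/2$.
   Context: $\operatorname{SE}(X)$ is the set of $x^*\in X^*$ strongly exposing $B_X$: there is $x_0\in B_X$ with $\operatorname{Re}x^*(x_0)=\sup_{B_X}\operatorname{Re}x^*$ and every sequence $\{x_n\}\subset B_X$ with $\operatorname{Re}x^*(x_n)\to\operatorname{Re}x^*(x_0)$ converges in norm to $x_0$; $\operatorname{str\text{-}exp}(B_X)$ is the set of points of $B_X$ strongly exposed by some functional. $X$ has property [P] (witnessed by a function $\varepsilon\in(0,1)\mapsto\eta(\varepsilon)>0$) if whenever $x\in S_X$, $x^*\in S_{X^*}$ satisfy $\operatorname{Re}x^*(x)>1-\eta(\varepsilon)$, there exist $y^*\in\operatorname{SE}(X)$ and $y\in S_X$ with $\|y^*\|=y^*(y)=1$, $\|y^*-x^*\|<\varepsilon$ and $\|y-x\|<\varepsilon$. Density in $\Pi(X)$ is with respect to the product norm topology. *)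

theory Defs
  imports "HOL-Analysis.Analysis"
begin

text \<open>B_X = cball 0 1, S_X = sphere 0 1.  (A complex Banach space is an instance
  of the class banach; Re x* corresponds isometrically to a real functional.)\<close>

definition strongly_exposes :: "('a::real_normed_vector \<Rightarrow>\<^sub>L real) \<Rightarrow> 'a \<Rightarrow> bool" where
  "strongly_exposes f x0 \<longleftrightarrow>
     x0 \<in> cball 0 1 \<and>
     f x0 = (SUP x\<in>cball 0 1. f x) \<and>
     (\<forall>xs. (\<forall>n. xs n \<in> cball 0 1) \<longrightarrow> (\<lambda>n. f (xs n)) \<longlonglongrightarrow> f x0 \<longrightarrow> xs \<longlonglongrightarrow> x0)"

definition SE :: "('a::real_normed_vector \<Rightarrow>\<^sub>L real) set" where
  "SE = {f. \<exists>x0. strongly_exposes f x0}"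

definition str_exp_ball :: "'a::real_normed_vector set" where
  "str_exp_ball = {x0. \<exists>f. strongly_exposes f x0}"

definition propP_with :: "'a::real_normed_vector itself \<Rightarrow> (real \<Rightarrow> real) \<Rightarrow> bool" where
  "propP_with _ eta \<longleftrightarrow>
     (\<forall>\<epsilon>. 0 < \<epsilon> \<and> \<epsilon> < 1 \<longrightarrow>
       (\<forall>x::'a. \<forall>g :: 'a \<Rightarrow>\<^sub>L real. norm x = 1 \<and> norm g = 1 \<and> blinfun_apply g x > 1 - eta \<epsilon> \<longrightarrow>
          (\<exists>ys \<in> SE. \<exists>y. norm y = 1 \<and> norm ys = 1 \<and> blinfun_apply ys y = 1 \<and>
              norm (ys - g) < \<epsilon> \<and> norm (y - x) < \<epsilon>)))"

definition has_propP :: "'a::real_normed_vector itself \<Rightarrow> bool" where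
  "has_propP T \<longleftrightarrow> (\<exists>eta. (\<forall>\<epsilon>. 0 < \<epsilon> \<and> \<epsilon> < 1 \<longrightarrow> eta \<epsilon> > 0) \<and> propP_with T eta)"

definition PiX :: "('a::real_normed_vector \<times> ('a \<Rightarrow>\<^sub>L real)) set" where
  "PiX = {(x, f). norm x = 1 \<and> norm f = 1 \<and> blinfun_apply f x = 1}"

end

theory Submission
  imports Defs
begin

text \<open>
  (i) implies (ii): property [P] applied to a pair (x, x*) of Pi(X) yields nearby pairs (y, y*)
  with y* in SE(X) norming y, and a point normed by a strongly exposing functional is the point
  it exposes. (ii) implies (iii): by the Bishop-Phelps-Bollobas theorem, g x > 1 - eps^2/2 gives
  a pair of Pi(X) strictly within eps of (x, g), and density moves it into the strongly exposed
  pairs without leaving that neighbourhood.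

  Ekeland's variational principle on the unit ball
  gives x0 close to x with g (y - x0) <= k * norm (y - x0) for all y in the ball; Hahn-Banach for
  the cone generated by the ball minus x0 then gives h with norm h <= k such that g - h attains
  its norm at x0.
\<close>

section \<open>Sublinear functionals and the Hahn--Banach theorem\<close>

definition sublinear :: "('a::real_vector \<Rightarrow> real) \<Rightarrow> bool" where
  "sublinear q \<longleftrightarrow> (\<forall>x y. q (x + y) \<le> q x + q y) \<and> (\<forall>c x. c > 0 \<longrightarrow> q (c *\<^sub>R x) \<le> c * q x)"

lemma sublinear_add: "sublinear q \<Longrightarrow> q (x + y) \<le> q x + q y"
  unfolding sublinear_def by blast

lemma sublinear_scaleR_le: "sublinear q \<Longrightarrow> c > 0 \<Longrightarrow> q (c *\<^sub>R x) \<le> c * q x"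
  unfolding sublinear_def by blast

lemma sublinear_scaleR:
  assumes q: "sublinear q" and c: "c > 0"
  shows "q (c *\<^sub>R x) = c * q x"
proof -
  have "q x = q (inverse c *\<^sub>R (c *\<^sub>R x))" using c by simp
  also have "\<dots> \<le> inverse c * q (c *\<^sub>R x)"
    using sublinear_scaleR_le[OF q, of "inverse c" "c *\<^sub>R x"] c by simp
  finally have "c * q x \<le> q (c *\<^sub>R x)" using c by (simp add: field_simps)
  thus ?thesis using sublinear_scaleR_le[OF q c, of x] by linarith
qed

lemma sublinear_0: "sublinear q \<Longrightarrow> q 0 = 0"
  using sublinear_scaleR[of q 2 0] by simp

lemma sublinear_scaleR_nonneg: "sublinear q \<Longrightarrow> c \<ge> 0 \<Longrightarrow> q (c *\<^sub>R x) = c * q x"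
  by (cases "c = 0") (simp_all add: sublinear_0 sublinear_scaleR)

lemma sublinear_neg_le: "sublinear q \<Longrightarrow> - q (- x) \<le> q x"
  using sublinear_add[of q x "- x"] sublinear_0[of q] by simp

lemma sublinear_norm: "k \<ge> 0 \<Longrightarrow> sublinear (\<lambda>x. k * norm x)"
  unfolding sublinear_def
  by (auto simp: distrib_left[symmetric] intro!: mult_left_mono norm_triangle_ineq)

lemma sublinear_INF:
  fixes f :: "'i \<Rightarrow> 'a::real_vector \<Rightarrow> real"
  assumes "I \<noteq> {}"
    and bdd: "\<And>x. bdd_below ((\<lambda>i. f i x) ` I)"
    and add: "\<And>i j x y. i \<in> I \<Longrightarrow> j \<in> I \<Longrightarrow> \<exists>l\<in>I. f l (x + y) \<le> f i x + f j y"
    and scale: "\<And>i c x. i \<in> I \<Longrightarrow> c > 0 \<Longrightarrow> \<exists>j\<in>I. f j (c *\<^sub>R x) \<le> c * f i x"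
  shows "sublinear (\<lambda>x. INF i\<in>I. f i x)"
proof -
  let ?q = "\<lambda>x. INF i\<in>I. f i x"
  have lower: "?q x \<le> f i x" if "i \<in> I" for i x
    using bdd that by (rule cINF_lower)
  have greatest: "r \<le> ?q x" if "\<And>i. i \<in> I \<Longrightarrow> r \<le> f i x" for r x
    using \<open>I \<noteq> {}\<close> that by (rule cINF_greatest)
  have "?q (x + y) \<le> ?q x + ?q y" for x y
  proof -
    have "?q (x + y) - f i x \<le> f j y" if ij: "i \<in> I" "j \<in> I" for i j
    proof -
      obtain l where "l \<in> I" "f l (x + y) \<le> f i x + f j y" using add[OF ij] by blast
      with lower[of l "x + y"] show ?thesis by linarith
    qed
    hence "?q (x + y) - f i x \<le> ?q y" if "i \<in> I" for i
      using that by (blast intro: greatest)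
    hence "?q (x + y) - ?q y \<le> ?q x"
      by (force intro: greatest)
    thus ?thesis by simp
  qed
  moreover have "?q (c *\<^sub>R x) \<le> c * ?q x" if c: "c > 0" for c x
  proof -
    have "?q (c *\<^sub>R x) / c \<le> f i x" if i: "i \<in> I" for i
    proof -
      obtain j where "j \<in> I" "f j (c *\<^sub>R x) \<le> c * f i x" using scale[OF i c] by blast
      with lower[of j "c *\<^sub>R x"] c show ?thesis by (simp add: field_simps)
    qed
    hence "?q (c *\<^sub>R x) / c \<le> ?q x" by (rule greatest)
    thus ?thesis using c by (simp add: field_simps)
  qed
  ultimately show ?thesis unfolding sublinear_def by blast
qed

lemma sublinear_odd_imp_linear:
  assumes q: "sublinear q" and odd: "\<And>x. q (- x) = - q x"
  shows "linear q"
proof (rule linearI)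
  fix x y
  have "q x \<le> q (x + y) + q (- y)" using sublinear_add[OF q, of "x + y" "- y"] by simp
  thus "q (x + y) = q x + q y" using odd[of y] sublinear_add[OF q, of x y] by simp
next
  fix c :: real and x
  show "q (c *\<^sub>R x) = c *\<^sub>R q x"
  proof (cases "c \<ge> 0")
    case True
    thus ?thesis using sublinear_scaleR_nonneg[OF q] by simp
  next
    case False
    hence "q (c *\<^sub>R x) = - c * q (- x)" using sublinear_scaleR_nonneg[OF q, of "- c" "- x"] by simp
    thus ?thesis using odd[of x] by simp
  qed
qed

lemma minimal_sublinear_imp_linear:
  fixes q :: "'a::real_vector \<Rightarrow> real"
  assumes q: "sublinear q" and minimal: "\<And>r. sublinear r \<Longrightarrow> r \<le> q \<Longrightarrow> r = q"
  shows "linear q"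
proof (rule sublinear_odd_imp_linear[OF q])
  fix a
  \<comment> \<open>The infimum over t \<ge> 0 is a sublinear minorant of q, hence q itself; t = 1 at - a gives oddness.\<close>
  define f where "f t x = q (x + t *\<^sub>R a) - t * q a" for t x
  have f_lower: "- q (- x) \<le> f t x" if "t \<ge> 0" for t x
    using sublinear_add[OF q, of "x + t *\<^sub>R a" "- x"] sublinear_scaleR_nonneg[OF q that]
    by (simp add: f_def)
  have bdd: "bdd_below ((\<lambda>t. f t x) ` {0..})" for x
    using f_lower by (intro bdd_belowI2) auto
  have INF_le: "(INF t\<in>{0..}. f t x) \<le> f t x" if "t \<ge> 0" for t x
    using bdd that by (intro cINF_lower) auto
  have "sublinear (\<lambda>x. INF t\<in>{0..}. f t x)"
  proof (rule sublinear_INF[OF _ bdd])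
    show "\<exists>l\<in>{0..}. f l (x + y) \<le> f s x + f t y" if "s \<in> {0..}" "t \<in> {0..}" for s t x y
      using that sublinear_add[OF q, of "x + s *\<^sub>R a" "y + t *\<^sub>R a"]
      by (intro bexI[of _ "s + t"]) (auto simp: f_def algebra_simps)
    show "\<exists>j\<in>{0..}. f j (c *\<^sub>R x) \<le> c * f t x" if "t \<in> {0..}" "c > 0" for t c x
      using that sublinear_scaleR[OF q \<open>c > 0\<close>, of "x + t *\<^sub>R a"]
      by (intro bexI[of _ "c * t"]) (auto simp: f_def algebra_simps)
  qed simp
  moreover have "(\<lambda>x. INF t\<in>{0..}. f t x) \<le> q"
    using INF_le[of 0] by (simp add: le_fun_def f_def)
  ultimately have "(\<lambda>x. INF t\<in>{0..}. f t x) = q" by (rule minimal)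
  hence "q (- a) \<le> f 1 (- a)" using INF_le[of 1 "- a"] by (metis zero_le_one)
  hence "q (- a) \<le> - q a" by (simp add: f_def sublinear_0[OF q])
  thus "q (- a) = - q a" using sublinear_neg_le[OF q, of a] by simp
qed

lemma sublinear_INF_chain:
  fixes C :: "('a::real_vector \<Rightarrow> real) set"
  assumes "C \<noteq> {}" and C: "\<And>q. q \<in> C \<Longrightarrow> sublinear q \<and> q \<le> p"
    and total: "\<And>q1 q2. q1 \<in> C \<Longrightarrow> q2 \<in> C \<Longrightarrow> q1 \<le> q2 \<or> q2 \<le> q1"
  shows "sublinear (\<lambda>x. INF q\<in>C. q x)" and "\<And>q. q \<in> C \<Longrightarrow> (\<lambda>x. INF q\<in>C. q x) \<le> q"
proof -
  have bdd: "bdd_below ((\<lambda>q. q x) ` C)" for x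
  proof (rule bdd_belowI2)
    fix q assume "q \<in> C"
    with C have "sublinear q" "q (- x) \<le> p (- x)" by (auto simp: le_fun_def)
    thus "- p (- x) \<le> q x" using sublinear_neg_le[of q x] by linarith
  qed
  show "(\<lambda>x. INF q\<in>C. q x) \<le> q" if "q \<in> C" for q
    using bdd that by (auto simp: le_fun_def intro: cINF_lower)
  show "sublinear (\<lambda>x. INF q\<in>C. q x)"
  proof (rule sublinear_INF[OF \<open>C \<noteq> {}\<close> bdd])
    show "\<exists>l\<in>C. l (x + y) \<le> q1 x + q2 y" if q12: "q1 \<in> C" "q2 \<in> C" for q1 q2 x y
    proof (cases "q1 \<le> q2")
      case True
      have "q1 (x + y) \<le> q1 x + q2 y"
        using q12 C sublinear_add[of q1 x y] le_funD[OF True, of y] by auto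
      thus ?thesis using q12 by blast
    next
      case False
      hence "q2 \<le> q1" using total[OF q12] by blast
      hence "q2 (x + y) \<le> q1 x + q2 y"
        using q12 C sublinear_add[of q2 x y] le_funD[of q2 q1 x] by auto
      thus ?thesis using q12 by blast
    qed
    show "\<exists>j\<in>C. j (c *\<^sub>R x) \<le> c * q x" if "q \<in> C" "c > 0" for q c x
      using that C sublinear_scaleR_le by blast
  qed
qed

text \<open>Hahn--Banach: by Zorn's lemma p has a minimal sublinear minorant, and that one is linear.\<close>
lemma exists_linear_le_sublinear:
  fixes p :: "'a::real_vector \<Rightarrow> real"
  assumes p: "sublinear p"
  shows "\<exists>h. linear h \<and> h \<le> p"
proof -
  let ?A = "{q. sublinear q \<and> q \<le> p}"
  have "\<exists>m\<in>?A. \<forall>q\<in>?A. q \<le> m \<longrightarrow> q = m"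
  proof (rule predicate_Zorn)
    show "partial_order_on ?A (relation_of (\<lambda>a b. b \<le> a) ?A)"
      by (rule partial_order_on_relation_ofI) auto
  next
    fix C assume C: "C \<in> Chains (relation_of (\<lambda>a b. b \<le> a) ?A)"
    hence CA: "C \<subseteq> ?A" by (rule Chains_relation_of)
    show "\<exists>u\<in>?A. \<forall>q\<in>C. u \<le> q"
    proof (cases "C = {}")
      case True
      thus ?thesis using p by auto
    next
      case False
      have total: "q1 \<le> q2 \<or> q2 \<le> q1" if "q1 \<in> C" "q2 \<in> C" for q1 q2
        using C that unfolding Chains_def relation_of_def by auto
      have "\<And>q. q \<in> C \<Longrightarrow> sublinear q \<and> q \<le> p" using CA by blast
      note INF_chain = sublinear_INF_chain[OF False this total]
      obtain q0 where "q0 \<in> C" using False by blast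
      thus ?thesis using CA INF_chain by (blast intro: order_trans)
    qed
  qed
  then obtain q where q: "sublinear q" "q \<le> p" and maximal: "\<And>r. sublinear r \<Longrightarrow> r \<le> p \<Longrightarrow> r \<le> q \<Longrightarrow> r = q"
    by blast
  have "linear q"
    using q(1) by (rule minimal_sublinear_imp_linear) (use q(2) maximal order_trans in blast)
  thus ?thesis using q(2) by blast
qed

lemma exists_linear_le_sublinear_ge_on_cone:
  fixes q \<phi> :: "'a::real_vector \<Rightarrow> real"
  assumes q: "sublinear q" and T: "convex_cone T" and \<phi>: "linear \<phi>"
    and \<phi>_le: "\<And>v. v \<in> T \<Longrightarrow> \<phi> v \<le> q v"
  shows "\<exists>h. linear h \<and> h \<le> q \<and> (\<forall>v\<in>T. \<phi> v \<le> h v)"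
proof -
  \<comment> \<open>A linear h below the infimum of the f v satisfies h (- v) \<le> f v (- v) = - \<phi> v on T.\<close>
  define f where "f v u = q (u + v) - \<phi> v" for v u
  have bdd: "bdd_below ((\<lambda>v. f v u) ` T)" for u
  proof (rule bdd_belowI2)
    fix v assume "v \<in> T"
    thus "- q (- u) \<le> f v u"
      using sublinear_add[OF q, of "u + v" "- u"] \<phi>_le[of v] by (simp add: f_def)
  qed
  have INF_le: "(INF v\<in>T. f v u) \<le> f v u" if "v \<in> T" for u v
    using bdd that by (rule cINF_lower)
  have "sublinear (\<lambda>u. INF v\<in>T. f v u)"
  proof (rule sublinear_INF[OF convex_cone_nonempty[OF T] bdd])
    show "\<exists>l\<in>T. f l (x + y) \<le> f v x + f w y" if "v \<in> T" "w \<in> T" for v w x y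
      using that sublinear_add[OF q, of "x + v" "y + w"] linear_add[OF \<phi>, of v w]
      by (intro bexI[of _ "v + w"] convex_cone_add[OF T]) (auto simp: f_def algebra_simps)
    show "\<exists>j\<in>T. f j (c *\<^sub>R x) \<le> c * f v x" if "v \<in> T" "c > 0" for v c x
      using that sublinear_scaleR[OF q \<open>c > 0\<close>, of "x + v"] linear_scale[OF \<phi>, of c v]
      by (intro bexI[of _ "c *\<^sub>R v"] convex_cone_scaleR[OF T]) (auto simp: f_def algebra_simps)
  qed
  then obtain h where h: "linear h" "h \<le> (\<lambda>u. INF v\<in>T. f v u)"
    using exists_linear_le_sublinear by blast
  have "h \<le> q"
  proof (rule le_funI)
    fix u
    have "h u \<le> f 0 u" using le_funD[OF h(2)] INF_le[OF convex_cone_contains_0[OF T]] order_trans by blast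
    thus "h u \<le> q u" using linear_0[OF \<phi>] by (simp add: f_def)
  qed
  moreover have "\<phi> v \<le> h v" if "v \<in> T" for v
  proof -
    have "h (- v) \<le> f v (- v)" using le_funD[OF h(2)] INF_le[OF that] order_trans by blast
    thus ?thesis using linear_neg[OF h(1), of v] sublinear_0[OF q] by (simp add: f_def)
  qed
  ultimately show ?thesis using h(1) by blast
qed

section \<open>Ekeland's variational principle\<close>

definition ekeland_upper_set :: "real \<Rightarrow> ('a::metric_space \<Rightarrow> real) \<Rightarrow> 'a set \<Rightarrow> 'a \<Rightarrow> 'a set" where
  "ekeland_upper_set k g C z = {y \<in> C. k * dist y z \<le> g y - g z}"

lemma ekeland_upper_set_refl: "z \<in> C \<Longrightarrow> z \<in> ekeland_upper_set k g C z"
  by (simp add: ekeland_upper_set_def)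

lemma ekeland_upper_set_trans:
  assumes k: "k \<ge> 0" and y: "y \<in> ekeland_upper_set k g C z"
  shows "ekeland_upper_set k g C y \<subseteq> ekeland_upper_set k g C z"
proof
  fix w assume w: "w \<in> ekeland_upper_set k g C y"
  have "k * dist w z \<le> k * dist w y + k * dist y z"
    using mult_left_mono[OF dist_triangle[of w z y] k] by (simp add: distrib_left)
  thus "w \<in> ekeland_upper_set k g C z" using y w by (simp add: ekeland_upper_set_def)
qed

lemma closed_ekeland_upper_set:
  "closed C \<Longrightarrow> continuous_on C g \<Longrightarrow> closed (ekeland_upper_set k g C z)"
  unfolding ekeland_upper_set_def by (intro continuous_on_closed_Collect_le continuous_intros)

lemma ekeland_variational_principle:
  fixes g :: "'a::complete_space \<Rightarrow> real"
  assumes C: "closed C" and x: "x \<in> C" and k: "k > 0"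
    and g: "continuous_on C g" and bdd: "bdd_above (g ` C)"
  obtains x0 where "x0 \<in> C" "k * dist x0 x \<le> g x0 - g x"
    and "\<And>y. y \<in> C \<Longrightarrow> k * dist y x0 \<le> g y - g x0 \<Longrightarrow> y = x0"
proof -
  define S where "S = ekeland_upper_set k g C"
  have S_refl: "z \<in> C \<Longrightarrow> z \<in> S z" for z
    unfolding S_def by (rule ekeland_upper_set_refl)
  have S_trans: "y \<in> S z \<Longrightarrow> S y \<subseteq> S z" for y z
    unfolding S_def using k by (intro ekeland_upper_set_trans) auto
  have S_sub: "S z \<subseteq> C" for z
    by (auto simp: S_def ekeland_upper_set_def)
  have step: "\<exists>y. y \<in> S z \<and> Sup (g ` S z) - (1/2)^n < g y" if "z \<in> C" for z and n :: nat
    using less_cSupD[of "g ` S z" "Sup (g ` S z) - (1/2)^n"] S_refl[OF that] by force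
  have "\<exists>f. \<forall>n. f n \<in> S x \<and> f (Suc n) \<in> S (f n) \<and> Sup (g ` S (f n)) - (1/2)^n < g (f (Suc n))"
  proof (rule dependent_nat_choice)
    show "\<exists>y. y \<in> S x \<and> y \<in> S z \<and> Sup (g ` S z) - (1/2)^n < g y" if "z \<in> S x" for z n
    proof -
      have "z \<in> C" using that S_sub by blast
      thus ?thesis using step[of z n] S_trans[OF that] by blast
    qed
  qed (use S_refl[OF x] in blast)
  then obtain f where f_in: "\<And>n. f n \<in> S x" and f_step: "\<And>n. f (Suc n) \<in> S (f n)"
    and f_sup: "\<And>n. Sup (g ` S (f n)) - (1/2)^n < g (f (Suc n))"
    by blast
  have radius: "k * dist y (f (Suc n)) < (1/2)^n" if "y \<in> S (f (Suc n))" for y n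
  proof -
    have "bdd_above (g ` S (f n))" using bdd S_sub by (meson bdd_above_mono image_mono)
    moreover have "y \<in> S (f n)" using that S_trans[OF f_step[of n]] by blast
    ultimately have "g y \<le> Sup (g ` S (f n))" by (intro cSup_upper) auto
    thus ?thesis using that f_sup[of n] by (simp add: S_def ekeland_upper_set_def)
  qed
  have "\<exists>x0. \<Inter>(range (\<lambda>n. S (f (Suc n)))) = {x0}"
  proof (rule decreasing_closed_nest_sing)
    show "closed (S (f (Suc n)))" for n unfolding S_def using C g by (rule closed_ekeland_upper_set)
    show "S (f (Suc n)) \<noteq> {}" for n
      using S_refl[of "f (Suc n)"] f_in[of "Suc n"] S_sub by blast
    show "S (f (Suc n)) \<subseteq> S (f (Suc m))" if "m \<le> n" for m n
      using lift_Suc_antimono_le[of "\<lambda>n. S (f (Suc n))"] S_trans f_step that by blast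
    show "\<exists>n. \<forall>a\<in>S (f (Suc n)). \<forall>b\<in>S (f (Suc n)). dist a b < \<epsilon>" if "\<epsilon> > 0" for \<epsilon>
    proof -
      obtain n where n: "(1/2)^n < k * \<epsilon> / 2"
        using real_arch_pow_inv[of "k * \<epsilon> / 2" "1/2"] k \<open>\<epsilon> > 0\<close> by auto
      have "dist a b < \<epsilon>" if "a \<in> S (f (Suc n))" "b \<in> S (f (Suc n))" for a b
      proof -
        have "k * dist a b \<le> k * dist a (f (Suc n)) + k * dist b (f (Suc n))"
          using mult_left_mono[OF dist_triangle3[of a b "f (Suc n)"], of k] k
          by (simp add: distrib_left dist_commute)
        also have "\<dots> < k * \<epsilon>" using radius[OF that(1)] radius[OF that(2)] n by linarith
        finally show ?thesis using k by simp
      qed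
      thus ?thesis by blast
    qed
  qed
  then obtain x0 where x0: "\<Inter>(range (\<lambda>n. S (f (Suc n)))) = {x0}" by blast
  hence x0_in: "x0 \<in> S (f (Suc n))" for n by blast
  have "x0 \<in> S x" using x0_in[of 0] S_trans[OF f_in[of 1]] by auto
  moreover have "y = x0" if "y \<in> S x0" for y
  proof -
    have "y \<in> S (f (Suc n))" for n using that S_trans[OF x0_in[of n]] by blast
    thus ?thesis using x0 by blast
  qed
  ultimately show ?thesis by (intro that) (auto simp: S_def ekeland_upper_set_def)
qed

section \<open>The Bishop--Phelps--Bollobas theorem\<close>

lemma bishop_phelps_support:
  fixes g :: "'a::real_normed_vector \<Rightarrow>\<^sub>L real"
  assumes K: "convex K" and x0: "x0 \<in> K" and k: "k \<ge> 0"
    and drop: "\<And>y. y \<in> K \<Longrightarrow> g (y - x0) \<le> k * norm (y - x0)"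
  obtains h :: "'a \<Rightarrow>\<^sub>L real" where "norm h \<le> k" and "\<And>y. y \<in> K \<Longrightarrow> (g - h) y \<le> (g - h) x0"
proof -
  define T where "T = conic hull ((\<lambda>y. y - x0) ` K)"
  have T: "convex_cone T"
    unfolding T_def convex_cone_def using x0 K
    by (auto simp: convex_conic_hull convex_translation_subtract conic_conic_hull conic_hull_eq_empty)
  have "g v \<le> k * norm v" if "v \<in> T" for v
  proof -
    from \<open>v \<in> T\<close> obtain c y where v: "v = c *\<^sub>R (y - x0)" "c \<ge> 0" "y \<in> K"
      unfolding T_def conic_hull_explicit by blast
    have "c * g (y - x0) \<le> c * (k * norm (y - x0))" using drop[OF v(3)] v(2) by (rule mult_left_mono)
    thus ?thesis using v by (simp add: blinfun.scaleR_right mult.left_commute)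
  qed
  then obtain h where h: "linear h" "h \<le> (\<lambda>u. k * norm u)" and g_le_h: "\<And>v. v \<in> T \<Longrightarrow> g v \<le> h v"
    using exists_linear_le_sublinear_ge_on_cone[OF sublinear_norm[OF k] T bounded_linear.linear[OF blinfun.bounded_linear_right]]
    by blast
  have h_abs: "\<bar>h u\<bar> \<le> k * norm u" for u
    using le_funD[OF h(2), of u] le_funD[OF h(2), of "- u"] linear_neg[OF h(1), of u] by simp
  have "bounded_linear h"
    using h(1) h_abs by (intro bounded_linear_intro[where K=k]) (auto simp: linear_add linear_scale mult.commute)
  hence apply_h: "blinfun_apply (Blinfun h) = h" by (rule bounded_linear_Blinfun_apply)
  show ?thesis
  proof (rule that[of "Blinfun h"])
    show "norm (Blinfun h) \<le> k"
      using k h_abs by (intro norm_blinfun_bound) (simp_all add: apply_h)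
    show "(g - Blinfun h) y \<le> (g - Blinfun h) x0" if "y \<in> K" for y
    proof -
      have "y - x0 \<in> T" unfolding T_def using that by (intro hull_inc) simp
      hence "g (y - x0) \<le> h (y - x0)" by (rule g_le_h)
      thus ?thesis using linear_diff[OF h(1)] by (simp add: apply_h blinfun.diff_left blinfun.diff_right)
    qed
  qed
qed

lemma blinfun_max_on_ball_eq_norm:
  fixes f :: "'a::real_normed_vector \<Rightarrow>\<^sub>L real"
  assumes x0: "norm x0 \<le> 1" and max: "\<And>y. norm y \<le> 1 \<Longrightarrow> f y \<le> f x0" and "f \<noteq> 0"
  shows "f x0 = norm f" and "norm x0 = 1"
proof -
  have "\<bar>f u\<bar> \<le> f x0 * norm u" for u
  proof (cases "u = 0")
    case False
    have "\<bar>f (sgn u)\<bar> \<le> f x0" using max[of "sgn u"] max[of "- sgn u"] False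
      by (simp add: norm_sgn blinfun.minus_right)
    thus ?thesis using False by (simp add: sgn_div_norm blinfun.scaleR_right abs_mult field_simps)
  qed simp
  hence upper: "norm f \<le> f x0" using max[of 0] by (intro norm_blinfun_bound) auto
  have lower: "f x0 \<le> norm f * norm x0" using norm_blinfun[of f x0] by simp
  have "norm f > 0" using \<open>f \<noteq> 0\<close> by simp
  thus "norm x0 = 1" using upper lower x0 by (smt (verit) mult_le_cancel_left1)
  thus "f x0 = norm f" using upper lower by simp
qed

lemma norm_sgn_minus_self:
  fixes x :: "'a::real_normed_vector"
  assumes "x \<noteq> 0"
  shows "norm (sgn x - x) = \<bar>1 - norm x\<bar>"
proof -
  have "sgn x - x = (inverse (norm x) - 1) *\<^sub>R x"
    by (simp add: sgn_div_norm scaleR_diff_left)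
  hence "norm (sgn x - x) = \<bar>(inverse (norm x) - 1) * norm x\<bar>"
    by (simp add: abs_mult)
  also have "(inverse (norm x) - 1) * norm x = 1 - norm x"
    using assms by (simp add: field_simps)
  finally show ?thesis .
qed

text \<open>This is where the constant eps^2/2 of statement (iii) comes from.\<close>
lemma exists_slope_below_half:
  fixes \<eta> \<epsilon> :: real
  assumes "0 \<le> \<eta>" "0 < \<epsilon>" "\<eta> < \<epsilon>\<^sup>2 / 2"
  obtains k where "0 < k" "k < \<epsilon> / 2" "\<eta> < k * \<epsilon>"
proof
  define k where "k = (\<eta> / \<epsilon> + \<epsilon> / 2) / 2"
  have lt: "\<eta> / \<epsilon> < \<epsilon> / 2" using assms by (simp add: field_simps power2_eq_square)
  have nonneg: "0 \<le> \<eta> / \<epsilon>" using assms by simp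
  have k_\<epsilon>: "k * \<epsilon> = (\<eta> + \<epsilon>\<^sup>2 / 2) / 2"
    using assms by (simp add: k_def field_simps power2_eq_square)
  show "0 < k" using nonneg assms(2) by (simp add: k_def)
  show "k < \<epsilon> / 2" using lt by (simp add: k_def)
  show "\<eta> < k * \<epsilon>" unfolding k_\<epsilon> using assms(3) by simp
qed

lemma bishop_phelps_bollobas:
  fixes x :: "'a::banach" and g :: "'a \<Rightarrow>\<^sub>L real"
  assumes x: "norm x = 1" and g: "norm g = 1" and \<epsilon>: "0 < \<epsilon>" "\<epsilon> < 2"
    and gx: "g x > 1 - \<epsilon>\<^sup>2 / 2"
  shows "\<exists>y. \<exists>z :: 'a \<Rightarrow>\<^sub>L real. norm y = 1 \<and> norm z = 1 \<and> blinfun_apply z y = 1 \<and> norm (z - g) < \<epsilon> \<and> norm (y - x) < \<epsilon>"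
proof -
  have g_le: "g u \<le> norm u" for u
    using norm_blinfun[of g u] g by simp
  obtain k where k: "0 < k" "k < \<epsilon> / 2" "1 - g x < k * \<epsilon>"
    using exists_slope_below_half[of "1 - g x" \<epsilon>] g_le[of x] x \<epsilon> gx by auto
  obtain x0 where x0: "norm x0 \<le> 1" and x0_x: "k * dist x0 x \<le> g x0 - g x"
    and maximal: "\<And>y. norm y \<le> 1 \<Longrightarrow> k * dist y x0 \<le> g y - g x0 \<Longrightarrow> y = x0"
  proof (rule ekeland_variational_principle[of "cball 0 1" x k g])
    show "bdd_above (g ` cball 0 1)" using g_le by (intro bdd_aboveI2[where M=1]) (smt (verit) mem_cball_0)
  qed (use x k in \<open>auto intro: continuous_intros\<close>)
  have "k * norm (x0 - x) < k * \<epsilon>"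
    using x0_x g_le[of x0] x0 k(3) by (simp add: dist_norm)
  hence near_x: "norm (x0 - x) < \<epsilon>" using k(1) by simp
  have "g (y - x0) \<le> k * norm (y - x0)" if "y \<in> cball 0 1" for y
    using maximal[of y] that by (cases "y = x0") (force simp: dist_norm blinfun.diff_right)+
  then obtain h where h: "norm h \<le> k" and attains: "\<And>y. norm y \<le> 1 \<Longrightarrow> (g - h) y \<le> (g - h) x0"
    using bishop_phelps_support[of "cball 0 1" x0 k g] x0 k(1) by auto
  have near_g: "\<bar>norm (g - h) - 1\<bar> \<le> k"
    using norm_triangle_ineq3[of "g - h" g] h g by simp
  hence "g - h \<noteq> 0" using k \<epsilon> by auto
  hence norm_attained: "(g - h) x0 = norm (g - h)" and x0_sphere: "norm x0 = 1"
    using blinfun_max_on_ball_eq_norm[OF x0 attains] by auto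
  define z where "z = sgn (g - h)"
  have "norm (z - g) \<le> norm (z - (g - h)) + norm h"
    using norm_triangle_ineq[of "z - (g - h)" "- h"] by (simp add: algebra_simps)
  hence "norm (z - g) < \<epsilon>"
    using norm_sgn_minus_self[OF \<open>g - h \<noteq> 0\<close>] near_g h k(2) unfolding z_def by linarith
  moreover have "norm z = 1" "z x0 = 1"
    using \<open>g - h \<noteq> 0\<close> norm_attained by (simp_all add: z_def norm_sgn sgn_div_norm blinfun.scaleR_left)
  ultimately show ?thesis using x0_sphere near_x by blast
qed

section \<open>Strongly exposed pairs\<close>

lemma closure_prod_approachable:
  fixes D :: "('a::metric_space \<times> 'b::metric_space) set"
  shows "(x, y) \<in> closure D \<longleftrightarrow> (\<forall>\<epsilon>>0. \<exists>(a, b)\<in>D. dist a x < \<epsilon> \<and> dist b y < \<epsilon>)"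
proof
  assume closure: "(x, y) \<in> closure D"
  show "\<forall>\<epsilon>>0. \<exists>(a, b)\<in>D. dist a x < \<epsilon> \<and> dist b y < \<epsilon>"
  proof (intro allI impI)
    fix \<epsilon> :: real assume "\<epsilon> > 0"
    then obtain p where "p \<in> D" "dist p (x, y) < \<epsilon>"
      using closure unfolding closure_approachable by blast
    moreover have "dist (fst p) x \<le> dist p (x, y)" "dist (snd p) y \<le> dist p (x, y)"
      using dist_fst_le[of p "(x, y)"] dist_snd_le[of p "(x, y)"] by simp_all
    ultimately show "\<exists>(a, b)\<in>D. dist a x < \<epsilon> \<and> dist b y < \<epsilon>"
      by (intro bexI[of _ p]) (auto simp: case_prod_beta)
  qed
next
  assume approx: "\<forall>\<epsilon>>0. \<exists>(a, b)\<in>D. dist a x < \<epsilon> \<and> dist b y < \<epsilon>"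
  show "(x, y) \<in> closure D"
    unfolding closure_approachable
  proof (intro allI impI)
    fix e :: real assume "e > 0"
    then obtain a b where ab: "(a, b) \<in> D" "dist a x < e / 2" "dist b y < e / 2"
      using approx[rule_format, of "e / 2"] by auto
    have "dist (a, b) (x, y) \<le> dist a x + dist b y"
      unfolding dist_Pair_Pair by (rule sqrt_sum_squares_le_sum) auto
    thus "\<exists>p\<in>D. dist p (x, y) < e" using ab by (intro bexI[of _ "(a, b)"]) simp_all
  qed
qed

definition strongly_exposed_pairs :: "('a::real_normed_vector \<times> ('a \<Rightarrow>\<^sub>L real)) set" where
  "strongly_exposed_pairs = {(x, f). x \<in> str_exp_ball \<and> f \<in> SE \<and> norm f = 1 \<and> blinfun_apply f x = 1}"

lemma norm_eq_1_if_norming: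
  fixes f :: "'a::real_normed_vector \<Rightarrow>\<^sub>L real"
  assumes "norm x \<le> 1" "norm f = 1" "f x = 1"
  shows "norm x = 1"
  using assms norm_blinfun[of f x] by simp

lemma str_exp_ball_subset_cball: "str_exp_ball \<subseteq> cball 0 1"
  unfolding str_exp_ball_def strongly_exposes_def by blast

lemma strongly_exposed_pairs_subset_PiX: "strongly_exposed_pairs \<subseteq> PiX"
proof (clarsimp simp: strongly_exposed_pairs_def PiX_def)
  fix x :: 'a and f :: "'a \<Rightarrow>\<^sub>L real"
  assume "x \<in> str_exp_ball" "norm f = 1" "f x = 1"
  thus "norm x = 1" using str_exp_ball_subset_cball norm_eq_1_if_norming by fastforce
qed

lemma SE_norming_point_in_str_exp_ball:
  fixes f :: "'a::real_normed_vector \<Rightarrow>\<^sub>L real"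
  assumes "f \<in> SE" "norm f = 1" "norm y \<le> 1" "f y = 1"
  shows "y \<in> str_exp_ball"
proof -
  obtain x0 where exposes: "strongly_exposes f x0" using assms(1) unfolding SE_def by blast
  hence x0: "x0 \<in> cball 0 1" and sup: "f x0 = (SUP x\<in>cball 0 1. f x)"
    and exposed: "\<And>xs. (\<forall>n. xs n \<in> cball 0 1) \<Longrightarrow> (\<lambda>n. f (xs n)) \<longlonglongrightarrow> f x0 \<Longrightarrow> xs \<longlonglongrightarrow> x0"
    unfolding strongly_exposes_def by blast+
  have f_le: "f u \<le> 1" if "u \<in> cball 0 1" for u
  proof -
    have "\<bar>f u\<bar> \<le> norm u" using norm_blinfun[of f u] assms(2) by simp
    thus ?thesis using that by (simp add: abs_le_iff)
  qed
  have "f y \<le> f x0" unfolding sup using assms(3) f_le by (intro cSUP_upper bdd_aboveI2) auto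
  hence "f x0 = f y" using f_le[OF x0] assms(4) by simp
  hence "(\<lambda>n. y) \<longlonglongrightarrow> x0" using exposed[of "\<lambda>n. y"] assms(3) by simp
  hence "y = x0" by (simp add: LIMSEQ_const_iff)
  thus ?thesis using exposes unfolding str_exp_ball_def by blast
qed

lemma propP_withD:
  fixes x :: "'a::real_normed_vector" and g :: "'a \<Rightarrow>\<^sub>L real"
  assumes "propP_with TYPE('a) \<eta>" "0 < \<epsilon>" "\<epsilon> < 1" "norm x = 1" "norm g = 1" "g x > 1 - \<eta> \<epsilon>"
  obtains z y where "z \<in> SE" "norm y = 1" "norm z = 1" "z y = 1" "norm (z - g) < \<epsilon>" "norm (y - x) < \<epsilon>"
  using assms unfolding propP_with_def by blast

lemma has_propP_imp_dense_strongly_exposed_pairs: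
  assumes "has_propP TYPE('a::real_normed_vector)"
  shows "PiX \<subseteq> closure (strongly_exposed_pairs :: ('a \<times> ('a \<Rightarrow>\<^sub>L real)) set)"
proof (clarsimp simp: PiX_def closure_prod_approachable)
  obtain \<eta> where \<eta>: "\<And>\<epsilon>. 0 < \<epsilon> \<Longrightarrow> \<epsilon> < 1 \<Longrightarrow> \<eta> \<epsilon> > 0" and P: "propP_with TYPE('a) \<eta>"
    using assms unfolding has_propP_def by blast
  fix x :: 'a and f :: "'a \<Rightarrow>\<^sub>L real" and e :: real
  assume x: "norm x = 1" and f: "norm f = 1" "f x = 1" and "e > 0"
  define \<epsilon> where "\<epsilon> = min e (1/2)"
  have \<epsilon>: "0 < \<epsilon>" "\<epsilon> < 1" "\<epsilon> \<le> e" unfolding \<epsilon>_def using \<open>e > 0\<close> by auto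
  obtain z y where "z \<in> SE" "norm y = 1" "norm z = 1" "z y = 1" "norm (z - f) < \<epsilon>" "norm (y - x) < \<epsilon>"
    using propP_withD[OF P \<epsilon>(1,2) x f(1)] f(2) \<eta>[OF \<epsilon>(1,2)] by auto
  moreover from this have "y \<in> str_exp_ball" by (intro SE_norming_point_in_str_exp_ball[of z]) auto
  ultimately have "(y, z) \<in> strongly_exposed_pairs" "dist y x < e" "dist z f < e"
    using \<epsilon>(3) by (auto simp: strongly_exposed_pairs_def dist_norm)
  thus "\<exists>(a, b)\<in>strongly_exposed_pairs. dist a x < e \<and> dist b f < e"
    by (intro bexI[of _ "(y, z)"]) simp_all
qed

lemma dense_strongly_exposed_pairs_imp_propP_with:
  assumes dense: "PiX \<subseteq> closure (strongly_exposed_pairs :: ('a::banach \<times> ('a \<Rightarrow>\<^sub>L real)) set)"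
  shows "propP_with TYPE('a) (\<lambda>\<epsilon>. \<epsilon>\<^sup>2 / 2)"
  unfolding propP_with_def
proof (intro allI impI, elim conjE)
  fix \<epsilon> :: real and x :: 'a and g :: "'a \<Rightarrow>\<^sub>L real"
  assume "0 < \<epsilon>" "\<epsilon> < 1" "norm x = 1" "norm g = 1" "1 - \<epsilon>\<^sup>2 / 2 < g x"
  then obtain y z where yz: "(y, z) \<in> PiX" "norm (z - g) < \<epsilon>" "norm (y - x) < \<epsilon>"
    using bishop_phelps_bollobas[of x g \<epsilon>] unfolding PiX_def by auto
  define \<delta> where "\<delta> = min (\<epsilon> - norm (z - g)) (\<epsilon> - norm (y - x))"
  have "\<delta> > 0" unfolding \<delta>_def using yz by simp
  moreover have "(y, z) \<in> closure strongly_exposed_pairs" using dense yz(1) by blast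
  ultimately have "\<exists>(y', z')\<in>strongly_exposed_pairs. dist y' y < \<delta> \<and> dist z' z < \<delta>"
    by (simp add: closure_prod_approachable)
  then obtain y' z' where y'z': "(y', z') \<in> strongly_exposed_pairs" "norm (y' - y) < \<delta>" "norm (z' - z) < \<delta>"
    by (auto simp: dist_norm)
  have "norm (z' - g) \<le> norm (z' - z) + norm (z - g)" "norm (y' - x) \<le> norm (y' - y) + norm (y - x)"
    using norm_triangle_ineq[of "z' - z" "z - g"] norm_triangle_ineq[of "y' - y" "y - x"] by simp_all
  hence "norm (z' - g) < \<epsilon>" "norm (y' - x) < \<epsilon>" using y'z' unfolding \<delta>_def by linarith+
  moreover have "z' \<in> SE" "norm y' = 1" "norm z' = 1" "z' y' = 1"
    using y'z'(1) strongly_exposed_pairs_subset_PiX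
    unfolding strongly_exposed_pairs_def PiX_def by auto
  ultimately show "\<exists>ys\<in>SE. \<exists>y. norm y = 1 \<and> norm ys = 1 \<and> blinfun_apply ys y = 1 \<and> norm (ys - g) < \<epsilon> \<and> norm (y - x) < \<epsilon>"
    by blast
qed

theorem lemma3p10:
  shows "(has_propP TYPE('a::banach)
            \<longleftrightarrow> PiX \<subseteq> closure {(x, f). x \<in> (str_exp_ball :: 'a set) \<and> f \<in> SE \<and> norm f = 1 \<and> blinfun_apply f x = 1})
       \<and> (has_propP TYPE('a::banach) \<longleftrightarrow> propP_with TYPE('a) (\<lambda>\<epsilon>. \<epsilon>^2 / 2))"
proof -
  have "propP_with TYPE('a) (\<lambda>\<epsilon>. \<epsilon>\<^sup>2 / 2) \<Longrightarrow> has_propP TYPE('a)"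
    unfolding has_propP_def by (intro exI[of _ "\<lambda>\<epsilon>. \<epsilon>\<^sup>2 / 2"]) auto
  thus ?thesis
    unfolding strongly_exposed_pairs_def[symmetric]
    using has_propP_imp_dense_strongly_exposed_pairs dense_strongly_exposed_pairs_imp_propP_with
    by blast
qed

end
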